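(* If $\xi=(\xi_1,\xi_2)$ is a simple max-stable bivariate random vector with dependency set $K$, then $$\mathbb{E}(\xi_1^{-1}\xi_2^{-1})=2V_2(K^o)\quad\text{and}\quad\mathrm{Cov}(\xi_1^{-1},\xi_2^{-1})=2V_2(K^o)-1,$$ where $K^o=\{x\in[0,\infty)^2:h(K,x)\le1\}$ and $V_2$ is area.
   Context: A simple max-stable random vector is max-stable with unit Fréchet marginals ($\mathbb{P}\{\xi_i\le t\}=e^{-1/t}$, $t>0$). Its dependency set is the compact convex $K\subset[0,1]^2$ with $\mathbb{P}\{\xi\le x\}=\exp\{-h(K,(1/x_1,1/x_2))\}$ for $x\in(0,\infty)^2$. The support function is $h(K,x)=\sup_{y\in K}\langle y,x\rangle$. *)

theory Defs
  imports "HOL-Probability.Probability"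
begin

definition supp_fun :: "(real \<times> real) set \<Rightarrow> real \<times> real \<Rightarrow> real" where
  "supp_fun K x = (SUP y\<in>K. y \<bullet> x)"

definition polar_pos :: "(real \<times> real) set \<Rightarrow> (real \<times> real) set" where
  "polar_pos K = {x. 0 \<le> fst x \<and> 0 \<le> snd x \<and> supp_fun K x \<le> 1}"

definition covariance :: "'a measure \<Rightarrow> ('a \<Rightarrow> real) \<Rightarrow> ('a \<Rightarrow> real) \<Rightarrow> real" where
  "covariance M X Y =
     integral\<^sup>L M (\<lambda>\<omega>. (X \<omega> - integral\<^sup>L M X) * (Y \<omega> - integral\<^sup>L M Y))"

definition simple_max_stable_dep :: "'a measure \<Rightarrow> ('a \<Rightarrow> real \<times> real) \<Rightarrow> (real \<times> real) set \<Rightarrow> bool" where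
  "simple_max_stable_dep M \<xi> K \<longleftrightarrow>
     prob_space M \<and> \<xi> \<in> borel_measurable M \<and>
     (\<forall>t>0. measure M {\<omega>\<in>space M. fst (\<xi> \<omega>) \<le> t} = exp (- 1 / t)) \<and>
     (\<forall>t>0. measure M {\<omega>\<in>space M. snd (\<xi> \<omega>) \<le> t} = exp (- 1 / t)) \<and>
     compact K \<and> convex K \<and> K \<subseteq> {0..1} \<times> {0..1} \<and>
     (\<forall>x1>0. \<forall>x2>0. measure M {\<omega>\<in>space M. fst (\<xi> \<omega>) \<le> x1 \<and> snd (\<xi> \<omega>) \<le> x2}
         = exp (- supp_fun K (1 / x1, 1 / x2)))"

end

theory Submission
  imports Defs
begin

text \<open>Put \<open>\<eta>\<^sub>i = 1/\<xi>\<^sub>i\<close>. For \<open>u\<close> in the open quadrant,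
  \<open>P{\<eta>\<^sub>1 \<ge> u\<^sub>1, \<eta>\<^sub>2 \<ge> u\<^sub>2} = P{\<xi>\<^sub>1 \<le> 1/u\<^sub>1, \<xi>\<^sub>2 \<le> 1/u\<^sub>2} = exp (-h(K,u))\<close>,
  so Tonelli gives \<open>E(\<eta>\<^sub>1\<eta>\<^sub>2) = \<integral> exp (-h(K,u)) du\<close> over the quadrant. Writing
  \<open>exp (-h) = \<integral>\<^bsub>t \<ge> h\<^esub> exp (-t) dt\<close> and using that \<open>h(K,\<cdot>)\<close> is positively
  homogeneous, so that \<open>{h \<le> t}\<close> is \<open>t K\<^sup>o\<close> of area \<open>t\<^sup>2 V\<^sub>2(K\<^sup>o)\<close>, the integral
  becomes \<open>\<integral>\<^sub>0\<^sup>\<infinity> t\<^sup>2 exp (-t) dt \<cdot> V\<^sub>2(K\<^sup>o) = 2 V\<^sub>2(K\<^sup>o)\<close>. The same tail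
  argument shows that each \<open>\<eta>\<^sub>i\<close> is standard exponential, so \<open>E \<eta>\<^sub>i = 1\<close>.\<close>

lemma supp_fun_upper:
  assumes "bounded K" "y \<in> K"
  shows "y \<bullet> x \<le> supp_fun K x"
proof -
  have "bounded ((\<lambda>y. y \<bullet> x) ` K)"
    using assms(1) bounded_linear_inner_left by (rule bounded_linear_image)
  then show ?thesis
    unfolding supp_fun_def using assms(2) by (intro cSUP_upper bounded_imp_bdd_above)
qed

lemma supp_fun_least:
  assumes "K \<noteq> {}" "\<And>y. y \<in> K \<Longrightarrow> y \<bullet> x \<le> c"
  shows "supp_fun K x \<le> c"
  unfolding supp_fun_def using assms by (rule cSUP_least)

lemma supp_fun_scaleR:
  assumes "bounded K" "K \<noteq> {}" "0 < t"
  shows "supp_fun K (t *\<^sub>R x) = t * supp_fun K x"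
proof (rule antisym)
  show "supp_fun K (t *\<^sub>R x) \<le> t * supp_fun K x"
    using assms by (intro supp_fun_least) (auto intro: mult_left_mono supp_fun_upper)
  have "supp_fun K x \<le> supp_fun K (t *\<^sub>R x) / t"
    using assms supp_fun_upper[OF assms(1), of _ "t *\<^sub>R x"]
    by (intro supp_fun_least) (auto simp: field_simps)
  then show "t * supp_fun K x \<le> supp_fun K (t *\<^sub>R x)"
    using assms(3) by (simp add: field_simps)
qed

lemma lipschitz_on_supp_fun:
  assumes "K \<subseteq> cball 0 R" "K \<noteq> {}"
  shows "R-lipschitz_on UNIV (supp_fun K)"
proof (rule lipschitz_onI)
  have "bounded K"
    using assms(1) bounded_cball bounded_subset by blast
  have le: "supp_fun K x \<le> supp_fun K x' + R * dist x x'" for x x'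
  proof (rule supp_fun_least[OF assms(2)])
    fix y assume "y \<in> K"
    then have "norm y \<le> R"
      using assms(1) by auto
    have "y \<bullet> x = y \<bullet> x' + y \<bullet> (x - x')"
      by (simp add: inner_diff_right)
    also have "y \<bullet> (x - x') \<le> R * dist x x'"
      using order_trans[OF norm_cauchy_schwarz mult_right_mono[OF \<open>norm y \<le> R\<close> norm_ge_zero]]
      by (simp add: dist_norm)
    also have "y \<bullet> x' \<le> supp_fun K x'"
      using \<open>bounded K\<close> \<open>y \<in> K\<close> by (rule supp_fun_upper)
    finally show "y \<bullet> x \<le> supp_fun K x' + R * dist x x'"
      by simp
  qed
  show "dist (supp_fun K x) (supp_fun K x') \<le> R * dist x x'" for x x'
    using le[of x x'] le[of x' x] by (simp add: dist_real_def dist_commute abs_le_iff)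
  show "0 \<le> R"
    using assms by (metis all_not_in_conv mem_cball_0 norm_ge_zero order_trans subset_iff)
qed

lemma borel_measurable_supp_fun:
  assumes "bounded K" "K \<noteq> {}"
  shows "supp_fun K \<in> borel_measurable borel"
proof -
  obtain R where "K \<subseteq> cball 0 R"
    using assms(1) by (metis bounded_pos subset_iff mem_cball_0)
  then show ?thesis
    using assms(2) by (intro borel_measurable_continuous_onI lipschitz_on_continuous_on lipschitz_on_supp_fun)
qed

lemma nn_integral_exp_neg_Ici:
  "(\<integral>\<^sup>+t. ennreal (exp (- t)) * indicator {a..} t \<partial>lborel) = ennreal (exp (- a))"
proof -
  have "(\<integral>\<^sup>+t. ennreal (exp (- t)) * indicator {a..} t \<partial>lborel)
      = (\<integral>\<^sup>+x. ennreal (exp (- a)) * (ennreal (x ^ 0 * exp (- x)) * indicator {0..} x) \<partial>lborel)"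
    by (subst nn_integral_real_affine[where c=1 and t=a])
       (auto intro!: nn_integral_cong simp: indicator_def exp_diff ennreal_mult'[symmetric] exp_minus field_simps)
  also have "\<dots> = ennreal (exp (- a)) * (\<integral>\<^sup>+x. ennreal (x ^ 0 * exp (- x)) * indicator {0..} x \<partial>lborel)"
    by (rule nn_integral_cmult) simp
  also have "\<dots> = ennreal (exp (- a))"
    by (simp only: nn_intergal_power_times_exp_Ici) simp
  finally show ?thesis .
qed

lemma nn_integral_exp_neg_layer_cake:
  assumes "sigma_finite_measure N" and [measurable]: "f \<in> borel_measurable N" "S \<in> sets N"
  shows "(\<integral>\<^sup>+u. ennreal (exp (- f u)) * indicator S u \<partial>N)
       = (\<integral>\<^sup>+t. ennreal (exp (- t)) * emeasure N {u\<in>S. f u \<le> t} \<partial>lborel)"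
proof -
  interpret N: sigma_finite_measure N by fact
  interpret pair_sigma_finite N "lborel :: real measure" ..
  define F where "F u t = (if u \<in> S \<and> f u \<le> t then ennreal (exp (- t)) else 0)" for u t
  have "case_prod F \<in> borel_measurable (N \<Otimes>\<^sub>M lborel)"
    unfolding F_def by measurable
  have "(\<integral>\<^sup>+t. F u t \<partial>lborel) = ennreal (exp (- f u)) * indicator S u" for u
  proof (cases "u \<in> S")
    case True
    then have "(\<integral>\<^sup>+t. F u t \<partial>lborel) = (\<integral>\<^sup>+t. ennreal (exp (- t)) * indicator {f u..} t \<partial>lborel)"
      by (intro nn_integral_cong) (simp add: F_def indicator_def)
    with True show ?thesis
      by (simp add: nn_integral_exp_neg_Ici)
  qed (simp add: F_def)
  moreover have "(\<integral>\<^sup>+u. F u t \<partial>N) = ennreal (exp (- t)) * emeasure N {u\<in>S. f u \<le> t}" for t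
  proof -
    have "{u\<in>S. f u \<le> t} \<in> sets N"
      using sets.sets_into_space[OF \<open>S \<in> sets N\<close>] by measurable
    then show ?thesis
      by (subst nn_integral_cmult_indicator[symmetric]) (auto intro!: nn_integral_cong simp: F_def indicator_def)
  qed
  ultimately show ?thesis
    using Fubini'[OF \<open>case_prod F \<in> _\<close>] by simp
qed

lemma emeasure_lborel_eq_scaleR_vimage:
  fixes B :: "'a::euclidean_space set"
  assumes "c \<noteq> 0" "B \<in> sets borel"
  shows "emeasure lborel B = ennreal (\<bar>c\<bar> ^ DIM('a)) * emeasure lborel ((\<lambda>x. c *\<^sub>R x) -` B)"
proof -
  have "emeasure lborel B = emeasure (density (distr lborel borel (\<lambda>x. 0 + c *\<^sub>R x)) (\<lambda>_. \<bar>c\<bar> ^ DIM('a))) B"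
    by (subst lborel_affine[OF assms(1)]) (rule refl)
  also have "\<dots> = ennreal (\<bar>c\<bar> ^ DIM('a)) * emeasure lborel ((\<lambda>x. c *\<^sub>R x) -` B)"
    using assms(2) by (simp add: emeasure_density nn_integral_cmult_indicator emeasure_distr)
  finally show ?thesis .
qed

lemma nn_integral_eq_emeasure_sections:
  assumes "sigma_finite_measure M" "sigma_finite_measure N" "A \<in> sets (M \<Otimes>\<^sub>M N)"
  shows "(\<integral>\<^sup>+x. emeasure N (Pair x -` A) \<partial>M) = (\<integral>\<^sup>+y. emeasure M ((\<lambda>x. (x, y)) -` A) \<partial>N)"
proof -
  interpret M: sigma_finite_measure M by fact
  interpret N: sigma_finite_measure N by fact
  interpret pair_sigma_finite M N ..
  show ?thesis
    using N.emeasure_pair_measure_alt[OF assms(3)] emeasure_pair_measure_alt2[OF assms(3)] by simp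
qed

lemma nn_integral_eq_tail_integral:
  assumes "sigma_finite_measure M" and [measurable]: "X \<in> borel_measurable M"
    and "AE \<omega> in M. 0 \<le> X \<omega>"
  shows "(\<integral>\<^sup>+\<omega>. ennreal (X \<omega>) \<partial>M)
       = (\<integral>\<^sup>+u. emeasure M {\<omega>\<in>space M. u \<le> X \<omega>} * indicator {0<..} u \<partial>lborel)"
proof -
  define A where "A = {p \<in> space (M \<Otimes>\<^sub>M lborel). 0 < snd p \<and> snd p \<le> X (fst p)}"
  have A: "A \<in> sets (M \<Otimes>\<^sub>M lborel)"
    unfolding A_def by measurable
  have "(\<integral>\<^sup>+\<omega>. ennreal (X \<omega>) \<partial>M) = (\<integral>\<^sup>+\<omega>. emeasure lborel (Pair \<omega> -` A) \<partial>M)"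
    using assms(3) AE_space
  proof (intro nn_integral_cong_AE, eventually_elim)
    fix \<omega> assume "0 \<le> X \<omega>" "\<omega> \<in> space M"
    then have "Pair \<omega> -` A = {0<..X \<omega>}"
      by (auto simp: A_def space_pair_measure)
    with \<open>0 \<le> X \<omega>\<close> show "ennreal (X \<omega>) = emeasure lborel (Pair \<omega> -` A)"
      by simp
  qed
  also have "\<dots> = (\<integral>\<^sup>+u. emeasure M ((\<lambda>\<omega>. (\<omega>, u)) -` A) \<partial>lborel)"
    using assms(1) sigma_finite_lborel A by (rule nn_integral_eq_emeasure_sections)
  also have "\<dots> = (\<integral>\<^sup>+u. emeasure M {\<omega>\<in>space M. u \<le> X \<omega>} * indicator {0<..} u \<partial>lborel)"
  proof (intro nn_integral_cong)
    fix u :: real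
    have "(\<lambda>\<omega>. (\<omega>, u)) -` A = (if 0 < u then {\<omega>\<in>space M. u \<le> X \<omega>} else {})"
      by (auto simp: A_def space_pair_measure)
    then show "emeasure M ((\<lambda>\<omega>. (\<omega>, u)) -` A) = emeasure M {\<omega>\<in>space M. u \<le> X \<omega>} * indicator {0<..} u"
      by (simp add: indicator_def)
  qed
  finally show ?thesis .
qed

lemma nn_integral_mult_eq_tail_integral:
  assumes "sigma_finite_measure M" and [measurable]: "X \<in> borel_measurable M" "Y \<in> borel_measurable M"
    and "AE \<omega> in M. 0 \<le> X \<omega> \<and> 0 \<le> Y \<omega>"
  shows "(\<integral>\<^sup>+\<omega>. ennreal (X \<omega> * Y \<omega>) \<partial>M)
       = (\<integral>\<^sup>+u. emeasure M {\<omega>\<in>space M. fst u \<le> X \<omega> \<and> snd u \<le> Y \<omega>}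
                * indicator ({0<..} \<times> {0<..}) u \<partial>lborel)" (is "_ = ?tail")
proof -
  define A where "A = {p \<in> space (M \<Otimes>\<^sub>M (lborel \<Otimes>\<^sub>M lborel)).
    0 < fst (snd p) \<and> fst (snd p) \<le> X (fst p) \<and> 0 < snd (snd p) \<and> snd (snd p) \<le> Y (fst p)}"
  have A: "A \<in> sets (M \<Otimes>\<^sub>M (lborel \<Otimes>\<^sub>M lborel))"
    unfolding A_def by measurable
  have "(\<integral>\<^sup>+\<omega>. ennreal (X \<omega> * Y \<omega>) \<partial>M)
      = (\<integral>\<^sup>+\<omega>. emeasure (lborel \<Otimes>\<^sub>M lborel) (Pair \<omega> -` A) \<partial>M)"
    using assms(4) AE_space
  proof (intro nn_integral_cong_AE, eventually_elim)
    fix \<omega> assume "0 \<le> X \<omega> \<and> 0 \<le> Y \<omega>" "\<omega> \<in> space M"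
    then have "Pair \<omega> -` A = {0<..X \<omega>} \<times> {0<..Y \<omega>}"
      by (auto simp: A_def space_pair_measure)
    with \<open>0 \<le> X \<omega> \<and> 0 \<le> Y \<omega>\<close>
    show "ennreal (X \<omega> * Y \<omega>) = emeasure (lborel \<Otimes>\<^sub>M lborel) (Pair \<omega> -` A)"
      by (simp add: lborel.emeasure_pair_measure_Times ennreal_mult)
  qed
  also have "\<dots> = (\<integral>\<^sup>+u. emeasure M ((\<lambda>\<omega>. (\<omega>, u)) -` A) \<partial>(lborel \<Otimes>\<^sub>M lborel))"
    using assms(1) _ A by (rule nn_integral_eq_emeasure_sections) (simp add: lborel_prod sigma_finite_lborel)
  also have "\<dots> = ?tail"
    unfolding lborel_prod
  proof (intro nn_integral_cong)
    fix u :: "real \<times> real"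
    have "(\<lambda>\<omega>. (\<omega>, u)) -` A
        = (if u \<in> {0<..} \<times> {0<..} then {\<omega>\<in>space M. fst u \<le> X \<omega> \<and> snd u \<le> Y \<omega>} else {})"
      by (auto simp: A_def space_pair_measure mem_Times_iff)
    then show "emeasure M ((\<lambda>\<omega>. (\<omega>, u)) -` A)
        = emeasure M {\<omega>\<in>space M. fst u \<le> X \<omega> \<and> snd u \<le> Y \<omega>} * indicator ({0<..} \<times> {0<..}) u"
      by (simp add: indicator_def)
  qed
  finally show ?thesis .
qed

lemma hyperplane_null_sets_lborel:
  fixes b :: "'a::euclidean_space"
  assumes "b \<in> Basis"
  shows "{x. x \<bullet> b = c} \<in> null_sets lborel"
proof -
  have "{x. x \<bullet> b = c} \<in> sets lborel"
    by simp
  then show ?thesis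
    using negligible_standard_hyperplane[OF assms, of c]
    by (simp add: negligible_iff_null_sets null_sets_completion_iff)
qed

lemma exp_neg_inverse_le: "0 < t \<Longrightarrow> exp (- 1 / t) \<le> (t::real)"
  using exp_ge_add_one_self[of "1 / t"] by (simp add: exp_minus field_simps)

lemma (in prob_space) AE_pos_if_unit_Frechet:
  assumes [measurable]: "X \<in> borel_measurable M"
    and "\<And>t. 0 < t \<Longrightarrow> prob {\<omega>\<in>space M. X \<omega> \<le> t} = exp (- 1 / t)"
  shows "AE \<omega> in M. 0 < X \<omega>"
proof -
  have "prob {\<omega>\<in>space M. X \<omega> \<le> 0} \<le> 0 + t" if "0 < t" for t
  proof -
    have "prob {\<omega>\<in>space M. X \<omega> \<le> 0} \<le> prob {\<omega>\<in>space M. X \<omega> \<le> t}"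
      using that by (intro finite_measure_mono) auto
    then show ?thesis
      using assms(2)[OF that] exp_neg_inverse_le[OF that] by linarith
  qed
  then have "prob {\<omega>\<in>space M. X \<omega> \<le> 0} = 0"
    by (meson field_le_epsilon measure_nonneg order_antisym)
  then show ?thesis
    by (subst AE_iff_measurable[of "{\<omega>\<in>space M. X \<omega> \<le> 0}"]) (auto simp: emeasure_eq_measure)
qed

lemma (in prob_space) covariance_eq:
  assumes "integrable M X" "integrable M Y" "integrable M (\<lambda>\<omega>. X \<omega> * Y \<omega>)"
  shows "covariance M X Y = expectation (\<lambda>\<omega>. X \<omega> * Y \<omega>) - expectation X * expectation Y"
proof -
  have "covariance M X Y = expectation (\<lambda>\<omega>. X \<omega> * Y \<omega> - expectation Y * X \<omega>
      - (expectation X * Y \<omega> - expectation X * expectation Y))"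
    unfolding covariance_def by (simp add: algebra_simps)
  also have "\<dots> = expectation (\<lambda>\<omega>. X \<omega> * Y \<omega>) - expectation X * expectation Y"
    using assms by (simp add: prob_space)
  finally show ?thesis .
qed

lemma (in prob_space) has_bochner_integral_inverse_unit_Frechet:
  assumes [measurable]: "X \<in> borel_measurable M"
    and "\<And>t. 0 < t \<Longrightarrow> prob {\<omega>\<in>space M. X \<omega> \<le> t} = exp (- 1 / t)"
  shows "has_bochner_integral M (\<lambda>\<omega>. inverse (X \<omega>)) 1"
proof (rule has_bochner_integral_nn_integral)
  have pos: "AE \<omega> in M. 0 < X \<omega>"
    using assms by (rule AE_pos_if_unit_Frechet)
  then show "AE \<omega> in M. 0 \<le> inverse (X \<omega>)"
    by eventually_elim simp
  have tail: "emeasure M {\<omega>\<in>space M. u \<le> inverse (X \<omega>)} = ennreal (exp (- u))" if "0 < u" for u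
  proof -
    have "emeasure M {\<omega>\<in>space M. u \<le> inverse (X \<omega>)} = emeasure M {\<omega>\<in>space M. X \<omega> \<le> 1 / u}"
      using pos by (intro emeasure_eq_AE) (auto elim!: eventually_mono simp: that field_simps)
    also have "\<dots> = ennreal (exp (- u))"
      using assms(2)[of "1 / u"] that by (simp add: emeasure_eq_measure)
    finally show ?thesis .
  qed
  have "(\<integral>\<^sup>+\<omega>. ennreal (inverse (X \<omega>)) \<partial>M)
      = (\<integral>\<^sup>+u. emeasure M {\<omega>\<in>space M. u \<le> inverse (X \<omega>)} * indicator {0<..} u \<partial>lborel)"
    using \<open>AE \<omega> in M. 0 \<le> inverse (X \<omega>)\<close>
    by (intro nn_integral_eq_tail_integral) (unfold_locales, measurable)
  also have "\<dots> = (\<integral>\<^sup>+u. ennreal (exp (- u)) * indicator {0..} u \<partial>lborel)"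
    using AE_lborel_singleton[of 0]
    by (intro nn_integral_cong_AE) (auto elim!: eventually_mono simp: tail indicator_def)
  also have "\<dots> = 1"
    using nn_integral_exp_neg_Ici[of 0] by simp
  finally show "(\<integral>\<^sup>+\<omega>. ennreal (inverse (X \<omega>)) \<partial>M) = ennreal 1"
    by simp
qed simp_all

locale simple_max_stable =
  fixes M :: "'a measure" and \<xi> :: "'a \<Rightarrow> real \<times> real" and K :: "(real \<times> real) set"
  assumes simple_max_stable_dep: "simple_max_stable_dep M \<xi> K"
begin

sublocale prob_space M
  using simple_max_stable_dep by (simp add: simple_max_stable_dep_def)

lemma borel_measurable_fst_\<xi>[measurable]: "(\<lambda>\<omega>. fst (\<xi> \<omega>)) \<in> borel_measurable M"
  and borel_measurable_snd_\<xi>[measurable]: "(\<lambda>\<omega>. snd (\<xi> \<omega>)) \<in> borel_measurable M"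
  using simple_max_stable_dep unfolding simple_max_stable_dep_def
  by (auto elim!: measurable_compose
      intro!: borel_measurable_continuous_onI continuous_on_fst continuous_on_snd continuous_on_id)

lemma prob_fst_le: "0 < t \<Longrightarrow> prob {\<omega>\<in>space M. fst (\<xi> \<omega>) \<le> t} = exp (- 1 / t)"
  and prob_snd_le: "0 < t \<Longrightarrow> prob {\<omega>\<in>space M. snd (\<xi> \<omega>) \<le> t} = exp (- 1 / t)"
  and prob_le: "0 < x1 \<Longrightarrow> 0 < x2 \<Longrightarrow>
    prob {\<omega>\<in>space M. fst (\<xi> \<omega>) \<le> x1 \<and> snd (\<xi> \<omega>) \<le> x2} = exp (- supp_fun K (1 / x1, 1 / x2))"
  and compact_K: "compact K"
  using simple_max_stable_dep by (simp_all add: simple_max_stable_dep_def)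

lemma AE_\<xi>_pos: "AE \<omega> in M. 0 < fst (\<xi> \<omega>) \<and> 0 < snd (\<xi> \<omega>)"
proof -
  have "AE \<omega> in M. 0 < fst (\<xi> \<omega>)"
    using prob_fst_le by (intro AE_pos_if_unit_Frechet) simp_all
  moreover have "AE \<omega> in M. 0 < snd (\<xi> \<omega>)"
    using prob_snd_le by (intro AE_pos_if_unit_Frechet) simp_all
  ultimately show ?thesis
    by eventually_elim simp
qed

lemma emeasure_inverse_ge:
  assumes "0 < fst u" "0 < snd u"
  shows "emeasure M {\<omega>\<in>space M. fst u \<le> inverse (fst (\<xi> \<omega>)) \<and> snd u \<le> inverse (snd (\<xi> \<omega>))}
    = ennreal (exp (- supp_fun K u))"
proof -
  have "emeasure M {\<omega>\<in>space M. fst u \<le> inverse (fst (\<xi> \<omega>)) \<and> snd u \<le> inverse (snd (\<xi> \<omega>))}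
      = emeasure M {\<omega>\<in>space M. fst (\<xi> \<omega>) \<le> 1 / fst u \<and> snd (\<xi> \<omega>) \<le> 1 / snd u}"
  proof (rule emeasure_eq_AE)
    show "AE \<omega> in M.
        \<omega> \<in> {\<omega>\<in>space M. fst u \<le> inverse (fst (\<xi> \<omega>)) \<and> snd u \<le> inverse (snd (\<xi> \<omega>))}
        \<longleftrightarrow> \<omega> \<in> {\<omega>\<in>space M. fst (\<xi> \<omega>) \<le> 1 / fst u \<and> snd (\<xi> \<omega>) \<le> 1 / snd u}"
      using AE_\<xi>_pos by eventually_elim (auto simp: assms field_simps)
  qed simp_all
  also have "\<dots> = ennreal (exp (- supp_fun K u))"
    using prob_le[of "1 / fst u" "1 / snd u"] assms by (simp add: emeasure_eq_measure)
  finally show ?thesis .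
qed

lemma fst_le_supp_fun:
  assumes "0 < fst u" "0 < snd u"
  shows "fst u \<le> supp_fun K u"
proof -
  have "exp (- supp_fun K u) = prob {\<omega>\<in>space M. fst (\<xi> \<omega>) \<le> 1 / fst u \<and> snd (\<xi> \<omega>) \<le> 1 / snd u}"
    using prob_le[of "1 / fst u" "1 / snd u"] assms by simp
  also have "\<dots> \<le> prob {\<omega>\<in>space M. fst (\<xi> \<omega>) \<le> 1 / fst u}"
    by (intro finite_measure_mono) auto
  also have "\<dots> = exp (- fst u)"
    using prob_fst_le[of "1 / fst u"] assms by simp
  finally show ?thesis
    by simp
qed

lemma snd_le_supp_fun:
  assumes "0 < fst u" "0 < snd u"
  shows "snd u \<le> supp_fun K u"
proof -
  have "exp (- supp_fun K u) = prob {\<omega>\<in>space M. fst (\<xi> \<omega>) \<le> 1 / fst u \<and> snd (\<xi> \<omega>) \<le> 1 / snd u}"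
    using prob_le[of "1 / fst u" "1 / snd u"] assms by simp
  also have "\<dots> \<le> prob {\<omega>\<in>space M. snd (\<xi> \<omega>) \<le> 1 / snd u}"
    by (intro finite_measure_mono) auto
  also have "\<dots> = exp (- snd u)"
    using prob_snd_le[of "1 / snd u"] assms by simp
  finally show ?thesis
    by simp
qed

lemma K_nonempty: "K \<noteq> {}"
proof
  assume "K = {}"
  then have "supp_fun K (supp_fun K (1, 1) + 1, 1) = supp_fun K (1, 1)"
    by (simp add: supp_fun_def)
  moreover have "1 \<le> supp_fun K (1, 1)"
    using fst_le_supp_fun[of "(1, 1)"] by simp
  ultimately show False
    using fst_le_supp_fun[of "(supp_fun K (1, 1) + 1, 1)"] by simp
qed

lemma borel_measurable_supp_fun_K[measurable]: "supp_fun K \<in> borel_measurable borel"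
  using compact_K K_nonempty by (intro borel_measurable_supp_fun compact_imp_bounded)

lemma quadrant_sublevel_supp_fun_subset: "{u \<in> {0<..} \<times> {0<..}. supp_fun K u \<le> t} \<subseteq> cbox (0, 0) (t, t)"
  using fst_le_supp_fun snd_le_supp_fun by (fastforce simp: cbox_Pair_eq mem_Times_iff)

lemma sets_quadrant_sublevel_supp_fun[measurable]:
  "{u \<in> {0<..} \<times> {0<..}. supp_fun K u \<le> t} \<in> sets borel"
  and sets_polar_pos[measurable]: "polar_pos K \<in> sets borel"
proof -
  have [measurable]: "fst \<in> borel_measurable (borel :: (real \<times> real) measure)"
    "snd \<in> borel_measurable (borel :: (real \<times> real) measure)"
    by (intro borel_measurable_continuous_onI continuous_intros)+
  show "{u \<in> {0<..} \<times> {0<..}. supp_fun K u \<le> t} \<in> sets borel" "polar_pos K \<in> sets borel"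
    unfolding polar_pos_def mem_Times_iff by measurable
qed

lemma emeasure_polar_pos:
  "emeasure lborel (polar_pos K) = emeasure lborel {u \<in> {0<..} \<times> {0<..}. supp_fun K u \<le> 1}"
    (is "_ = emeasure lborel ?P")
proof -
  have axes: "{x. x \<bullet> (1, 0) = 0} \<union> {x. x \<bullet> (0, 1) = 0} \<in> null_sets (lborel :: (real \<times> real) measure)"
    by (intro null_sets.Un hyperplane_null_sets_lborel) (simp_all add: Basis_prod_def)
  have "polar_pos K - ?P \<subseteq> {x. x \<bullet> (1, 0) = 0} \<union> {x. x \<bullet> (0, 1) = 0}"
    by (auto simp: polar_pos_def mem_Times_iff inner_prod_def)
  then have null: "polar_pos K - ?P \<in> null_sets lborel"
    using null_sets_subset[OF axes] by simp
  have "polar_pos K = ?P \<union> (polar_pos K - ?P)"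
    by (auto simp: polar_pos_def mem_Times_iff)
  then have "emeasure lborel (polar_pos K) = emeasure lborel (?P \<union> (polar_pos K - ?P))"
    by (rule arg_cong)
  also have "\<dots> = emeasure lborel ?P"
    using null by (intro emeasure_Un_null_set) simp_all
  finally show ?thesis .
qed

lemma emeasure_polar_pos_finite: "emeasure lborel (polar_pos K) < \<infinity>"
proof -
  have "emeasure lborel (polar_pos K) \<le> emeasure lborel (cbox (0, 0) (1 :: real, 1 :: real))"
    unfolding emeasure_polar_pos using quadrant_sublevel_supp_fun_subset[of 1] by (intro emeasure_mono) auto
  then show ?thesis
    using emeasure_lborel_cbox_finite le_less_trans by blast
qed

lemma emeasure_quadrant_sublevel_supp_fun:
  assumes "0 < t"
  shows "emeasure lborel {u \<in> {0<..} \<times> {0<..}. supp_fun K u \<le> t}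
    = ennreal (t\<^sup>2) * emeasure lborel (polar_pos K)"
proof -
  have "supp_fun K (t *\<^sub>R x) \<le> t \<longleftrightarrow> supp_fun K x \<le> 1" for x
    using supp_fun_scaleR[OF compact_imp_bounded[OF compact_K] K_nonempty assms] assms by simp
  then have "(\<lambda>x. t *\<^sub>R x) -` {u \<in> {0<..} \<times> {0<..}. supp_fun K u \<le> t}
      = {u \<in> {0<..} \<times> {0<..}. supp_fun K u \<le> 1}"
    using assms by (auto simp: mem_Times_iff zero_less_mult_iff)
  then show ?thesis
    using emeasure_lborel_eq_scaleR_vimage[of t "{u \<in> {0<..} \<times> {0<..}. supp_fun K u \<le> t}"] assms
    by (simp add: emeasure_polar_pos power2_eq_square)
qed

lemma nn_integral_exp_neg_supp_fun:
  "(\<integral>\<^sup>+u. ennreal (exp (- supp_fun K u)) * indicator ({0<..} \<times> {0<..}) u \<partial>lborel)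
    = 2 * emeasure lborel (polar_pos K)"
proof -
  have "(\<integral>\<^sup>+u. ennreal (exp (- supp_fun K u)) * indicator ({0<..} \<times> {0<..}) u \<partial>lborel)
      = (\<integral>\<^sup>+t. ennreal (exp (- t)) * emeasure lborel {u \<in> {0<..} \<times> {0<..}. supp_fun K u \<le> t} \<partial>lborel)"
    by (rule nn_integral_exp_neg_layer_cake) (simp_all add: sigma_finite_lborel borel_open open_Times)
  also have "\<dots>
      = (\<integral>\<^sup>+t. ennreal (t\<^sup>2 * exp (- t)) * indicator {0..} t * emeasure lborel (polar_pos K) \<partial>lborel)"
  proof (rule nn_integral_cong)
    fix t :: real
    show "ennreal (exp (- t)) * emeasure lborel {u \<in> {0<..} \<times> {0<..}. supp_fun K u \<le> t}
        = ennreal (t\<^sup>2 * exp (- t)) * indicator {0..} t * emeasure lborel (polar_pos K)"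
    proof (cases "0 < t")
      case True
      then show ?thesis
        by (simp add: emeasure_quadrant_sublevel_supp_fun ennreal_mult' mult_ac)
    next
      case False
      then have empty: "{u \<in> {0<..} \<times> {0<..}. supp_fun K u \<le> t} = {}"
        using fst_le_supp_fun by (force simp: mem_Times_iff)
      have zero: "ennreal (t\<^sup>2 * exp (- t)) * indicator {0..} t = 0"
        using False by (cases "t = 0") (auto simp: indicator_def)
      show ?thesis
        by (simp only: empty zero emeasure_empty mult_zero_left mult_zero_right)
    qed
  qed
  also have "\<dots>
      = (\<integral>\<^sup>+t. ennreal (t\<^sup>2 * exp (- t)) * indicator {0..} t \<partial>lborel) * emeasure lborel (polar_pos K)"
    by (rule nn_integral_multc) simp
  also have "\<dots> = 2 * emeasure lborel (polar_pos K)"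
    by (simp only: nn_intergal_power_times_exp_Ici) simp
  finally show ?thesis .
qed

lemma has_bochner_integral_inverse_mult:
  "has_bochner_integral M (\<lambda>\<omega>. inverse (fst (\<xi> \<omega>)) * inverse (snd (\<xi> \<omega>)))
    (2 * measure lborel (polar_pos K))"
proof (rule has_bochner_integral_nn_integral)
  have pos: "AE \<omega> in M. 0 \<le> inverse (fst (\<xi> \<omega>)) \<and> 0 \<le> inverse (snd (\<xi> \<omega>))"
    using AE_\<xi>_pos by eventually_elim simp
  then show "AE \<omega> in M. 0 \<le> inverse (fst (\<xi> \<omega>)) * inverse (snd (\<xi> \<omega>))"
    by eventually_elim simp
  have "(\<integral>\<^sup>+\<omega>. ennreal (inverse (fst (\<xi> \<omega>)) * inverse (snd (\<xi> \<omega>))) \<partial>M)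
      = (\<integral>\<^sup>+u. emeasure M {\<omega>\<in>space M. fst u \<le> inverse (fst (\<xi> \<omega>)) \<and> snd u \<le> inverse (snd (\<xi> \<omega>))}
               * indicator ({0<..} \<times> {0<..}) u \<partial>lborel)"
    using pos by (intro nn_integral_mult_eq_tail_integral) (unfold_locales, measurable)
  also have "\<dots> = (\<integral>\<^sup>+u. ennreal (exp (- supp_fun K u)) * indicator ({0<..} \<times> {0<..}) u \<partial>lborel)"
    by (intro nn_integral_cong) (simp add: emeasure_inverse_ge indicator_def mem_Times_iff)
  also have "\<dots> = ennreal (2 * measure lborel (polar_pos K))"
    using emeasure_polar_pos_finite
    by (simp add: nn_integral_exp_neg_supp_fun emeasure_eq_ennreal_measure ennreal_mult)
  finally show "(\<integral>\<^sup>+\<omega>. ennreal (inverse (fst (\<xi> \<omega>)) * inverse (snd (\<xi> \<omega>))) \<partial>M)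
      = ennreal (2 * measure lborel (polar_pos K))" .
qed simp_all

end

theorem proposition5p3:
  fixes M :: "'a measure" and \<xi> :: "'a \<Rightarrow> real \<times> real" and K :: "(real \<times> real) set"
  assumes "simple_max_stable_dep M \<xi> K"
  shows "integrable M (\<lambda>\<omega>. inverse (fst (\<xi> \<omega>)) * inverse (snd (\<xi> \<omega>))) \<and>
         integral\<^sup>L M (\<lambda>\<omega>. inverse (fst (\<xi> \<omega>)) * inverse (snd (\<xi> \<omega>)))
           = 2 * measure lborel (polar_pos K) \<and>
         covariance M (\<lambda>\<omega>. inverse (fst (\<xi> \<omega>))) (\<lambda>\<omega>. inverse (snd (\<xi> \<omega>)))
           = 2 * measure lborel (polar_pos K) - 1"
proof -
  interpret simple_max_stable M \<xi> K
    using assms by unfold_locales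
  have "has_bochner_integral M (\<lambda>\<omega>. inverse (fst (\<xi> \<omega>))) 1"
    using borel_measurable_fst_\<xi> prob_fst_le by (rule has_bochner_integral_inverse_unit_Frechet)
  moreover have "has_bochner_integral M (\<lambda>\<omega>. inverse (snd (\<xi> \<omega>))) 1"
    using borel_measurable_snd_\<xi> prob_snd_le by (rule has_bochner_integral_inverse_unit_Frechet)
  ultimately show ?thesis
    using has_bochner_integral_inverse_mult by (simp add: has_bochner_integral_iff covariance_eq)
qed

end
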